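(* Let $k\ge 2$ and let $T$ be a tree of order $n$ with $\gamma_k(T)=2$. Then \[ \Pi_1(T)\ge 4^{2k-1}(n-2k)^2 \quad\text{and}\quad \Pi_2(T)\le 4^{2k-1}(n-2k)^{n-2k}. \] Either equality holds if and only if $T\cong T^a_{n,k,2}$ for some $a\in\{1,\dots,k\}$.
   Context: For a graph $G$ with vertex degrees $d_G(u)$: $\Pi_1(G)=\prod_{u\in V(G)}d_G(u)^2$ and $\Pi_2(G)=\prod_{uv\in E(G)}d_G(u)d_G(v)=\prod_{u\in V(G)}d_G(u)^{d_G(u)}$. A set $D\subseteq V(G)$ is a distance $k$-dominating set if every vertex not in $D$ is at distance at most $k$ from some vertex of $D$; $\gamma_k(G)$ is the minimum size of such a set. For $n\ge 2k+2$ and $a\in\{1,\dots,k\}$, $T^a_{n,k,2}$ is the tree obtained from the path $v_0v_1\cdots v_{2k+1}$ on $2k+2$ vertices by attaching $n-2(k+1)$ new pendent vertices to $v_a$. *)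

theory Defs
  imports Main
begin

definition simple_graph :: "'a set \<Rightarrow> ('a \<Rightarrow> 'a \<Rightarrow> bool) \<Rightarrow> bool" where
  "simple_graph V E \<longleftrightarrow> finite V \<and> (\<forall>u v. E u v \<longrightarrow> u \<in> V \<and> v \<in> V \<and> u \<noteq> v \<and> E v u)"

definition deg :: "'a set \<Rightarrow> ('a \<Rightarrow> 'a \<Rightarrow> bool) \<Rightarrow> 'a \<Rightarrow> nat" where
  "deg V E u = card {v \<in> V. E u v}"

definition edges :: "('a \<Rightarrow> 'a \<Rightarrow> bool) \<Rightarrow> 'a set set" where
  "edges E = {{u, v} | u v. E u v}"

definition connected :: "'a set \<Rightarrow> ('a \<Rightarrow> 'a \<Rightarrow> bool) \<Rightarrow> bool" where
  "connected V E \<longleftrightarrow> (\<forall>u\<in>V. \<forall>v\<in>V. E\<^sup>*\<^sup>* u v)"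

definition is_tree :: "'a set \<Rightarrow> ('a \<Rightarrow> 'a \<Rightarrow> bool) \<Rightarrow> bool" where
  "is_tree V E \<longleftrightarrow> simple_graph V E \<and> V \<noteq> {} \<and> connected V E \<and> card (edges E) = card V - 1"

definition dist_le :: "('a \<Rightarrow> 'a \<Rightarrow> bool) \<Rightarrow> nat \<Rightarrow> 'a \<Rightarrow> 'a \<Rightarrow> bool" where
  "dist_le E k u v \<longleftrightarrow> (\<exists>j\<le>k. (E ^^ j) u v)"

definition dist_k_dominating :: "'a set \<Rightarrow> ('a \<Rightarrow> 'a \<Rightarrow> bool) \<Rightarrow> nat \<Rightarrow> 'a set \<Rightarrow> bool" where
  "dist_k_dominating V E k D \<longleftrightarrow> D \<subseteq> V \<and> (\<forall>v \<in> V - D. \<exists>u\<in>D. dist_le E k u v)"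

definition gamma_k :: "'a set \<Rightarrow> ('a \<Rightarrow> 'a \<Rightarrow> bool) \<Rightarrow> nat \<Rightarrow> nat" where
  "gamma_k V E k = (LEAST m. \<exists>D. dist_k_dominating V E k D \<and> card D = m)"

definition Pi1 :: "'a set \<Rightarrow> ('a \<Rightarrow> 'a \<Rightarrow> bool) \<Rightarrow> nat" where
  "Pi1 V E = (\<Prod>u\<in>V. deg V E u ^ 2)"

definition Pi2 :: "'a set \<Rightarrow> ('a \<Rightarrow> 'a \<Rightarrow> bool) \<Rightarrow> nat" where
  "Pi2 V E = (\<Prod>u\<in>V. deg V E u ^ deg V E u)"

definition graph_iso :: "'a set \<Rightarrow> ('a \<Rightarrow> 'a \<Rightarrow> bool) \<Rightarrow> 'b set \<Rightarrow> ('b \<Rightarrow> 'b \<Rightarrow> bool) \<Rightarrow> bool" where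
  "graph_iso V E V' E' \<longleftrightarrow> (\<exists>f. bij_betw f V V' \<and> (\<forall>u\<in>V. \<forall>v\<in>V. E u v \<longleftrightarrow> E' (f u) (f v)))"

text \<open>The tree T^a_{n,k,2} on vertex set {0..<n}: path 0,1,...,2k+1 (vertex i is v_i),
  and the vertices 2k+2,...,n-1 are pendent vertices attached to a.\<close>
definition T_edge :: "nat \<Rightarrow> nat \<Rightarrow> nat \<Rightarrow> nat \<Rightarrow> nat \<Rightarrow> bool" where
  "T_edge n k a u v \<longleftrightarrow> u < n \<and> v < n \<and>
     ((u \<le> 2*k+1 \<and> v \<le> 2*k+1 \<and> (u = v + 1 \<or> v = u + 1))
      \<or> (u = a \<and> v \<ge> 2*k+2) \<or> (v = a \<and> u \<ge> 2*k+2))"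

end

theory Submission
  imports Defs
begin

text \<open>Deleting all leaves of a tree lowers every eccentricity by one and removes at least two
  vertices, so a tree in which no vertex lies within distance j of all others has at least 2j + 2
  vertices. Applied with j = k - 1 to T without its leaves, this shows that T has m \<ge> 2k inner
  vertices, and its n - m leaves satisfy n - m = 2 + \<Sum> (d(v) - 2) over the inner vertices v.
  For a fixed value of this sum, \<Prod> d(v) is smallest and \<Prod> d(v)^d(v) largest when all the
  excess sits at a single vertex, which gives Pi1 \<ge> (2^(m-1) (n-m))^2 and
  Pi2 \<le> 4^(m-1) (n-m)^(n-m); both bounds are strictly monotone in m and weakest at m = 2k.
  Equality therefore forces m = 2k and at most one vertex of degree \<ge> 3. Then the inner
  vertices form a path on 2k vertices whose two ends carry one leaf each, and all remaining
  leaves hang at the single branch vertex: T is some T^a_{n,k,2}.\<close>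

section \<open>Trees described by degree sums\<close>

text \<open>The edge count of is_tree is replaced by the degree sum, the form of the
  condition that survives deleting all leaves.\<close>
definition tree_by_degrees :: "'a set \<Rightarrow> ('a \<Rightarrow> 'a \<Rightarrow> bool) \<Rightarrow> bool" where
  "tree_by_degrees V E \<longleftrightarrow> simple_graph V E \<and> V \<noteq> {} \<and> connected V E \<and>
     (\<Sum>v\<in>V. deg V E v) = 2 * (card V - 1)"

definition leaves :: "'a set \<Rightarrow> ('a \<Rightarrow> 'a \<Rightarrow> bool) \<Rightarrow> 'a set" where
  "leaves V E = {v\<in>V. deg V E v = 1}"

definition inner :: "'a set \<Rightarrow> ('a \<Rightarrow> 'a \<Rightarrow> bool) \<Rightarrow> 'a set" where
  "inner V E = {v\<in>V. 2 \<le> deg V E v}"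

definition prune :: "'a set \<Rightarrow> ('a \<Rightarrow> 'a \<Rightarrow> bool) \<Rightarrow> 'a \<Rightarrow> 'a \<Rightarrow> bool" where
  "prune V E u v \<longleftrightarrow> E u v \<and> u \<in> inner V E \<and> v \<in> inner V E"

text \<open>Meaningful only at leaves, where the neighbour is unique.\<close>
definition leaf_nbr :: "('a \<Rightarrow> 'a \<Rightarrow> bool) \<Rightarrow> 'a \<Rightarrow> 'a" where
  "leaf_nbr E z = (THE w. E z w)"

lemma simple_graph_finite: "simple_graph V E \<Longrightarrow> finite V"
  by (simp add: simple_graph_def)

lemma simple_graph_adjD: "simple_graph V E \<Longrightarrow> E u v \<Longrightarrow> u \<in> V \<and> v \<in> V \<and> u \<noteq> v \<and> E v u"
  by (simp add: simple_graph_def)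

lemma simple_graph_adj_sym: "simple_graph V E \<Longrightarrow> E u v \<longleftrightarrow> E v u"
  using simple_graph_adjD by metis

lemma deg_eq_card_incident_edges:
  assumes sg: "simple_graph V E" and v: "v \<in> V"
  shows "deg V E v = card {e\<in>edges E. v \<in> e}"
proof -
  have "bij_betw (\<lambda>w. {v,w}) {w\<in>V. E v w} {e\<in>edges E. v \<in> e}"
  proof (rule bij_betwI')
    fix e assume "e \<in> {e \<in> edges E. v \<in> e}"
    then obtain u u' where e: "e = {u,u'}" "E u u'" "v \<in> e" by (auto simp: edges_def)
    then show "\<exists>w\<in>{w \<in> V. E v w}. e = {v, w}"
      using simple_graph_adjD[OF sg e(2)] by auto
  qed (auto simp: doubleton_eq_iff edges_def)
  then show ?thesis unfolding deg_def by (rule bij_betw_same_card)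
qed

lemma sum_deg_eq_twice_card_edges:
  assumes sg: "simple_graph V E"
  shows "(\<Sum>v\<in>V. deg V E v) = 2 * card (edges E)"
proof -
  have fV: "finite V" using simple_graph_finite[OF sg] .
  have "edges E \<subseteq> Pow V"
    using sg unfolding simple_graph_def edges_def by auto
  then have fE: "finite (edges E)" using fV by (meson finite_Pow_iff finite_subset)
  have "(\<Sum>v\<in>V. deg V E v) = (\<Sum>v\<in>V. card {e\<in>edges E. v \<in> e})"
    using deg_eq_card_incident_edges[OF sg] by simp
  also have "\<dots> = 2 * card (edges E)"
  proof (rule sum_multicount[OF fV fE], rule ballI)
    fix e assume "e \<in> edges E"
    then obtain u u' where e: "e = {u,u'}" "E u u'" by (auto simp: edges_def)
    then have "{i\<in>V. i \<in> e} = {u,u'}" "u \<noteq> u'" using simple_graph_adjD[OF sg e(2)] by auto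
    then show "card {i\<in>V. i \<in> e} = 2" by simp
  qed
  finally show ?thesis .
qed

lemma is_tree_imp_tree_by_degrees: "is_tree V E \<Longrightarrow> tree_by_degrees V E"
  unfolding is_tree_def tree_by_degrees_def using sum_deg_eq_twice_card_edges by metis

lemma tree_by_degrees_simple: "tree_by_degrees V E \<Longrightarrow> simple_graph V E"
  by (simp add: tree_by_degrees_def)

lemma deg_pos_iff: "simple_graph V E \<Longrightarrow> 0 < deg V E v \<longleftrightarrow> (\<exists>w. E v w)"
proof -
  assume sg: "simple_graph V E"
  have "finite {w\<in>V. E v w}" using simple_graph_finite[OF sg] by simp
  then show ?thesis unfolding deg_def using simple_graph_adjD[OF sg] by (auto simp: card_gt_0_iff)
qed

lemma card_le_deg:
  assumes sg: "simple_graph V E" and "S \<subseteq> {w. E v w}"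
  shows "card S \<le> deg V E v"
  unfolding deg_def using assms simple_graph_adjD[OF sg] simple_graph_finite[OF sg]
  by (intro card_mono) auto

lemma leaf_adj_iff:
  assumes sg: "simple_graph V E" and z: "z \<in> leaves V E"
  shows "E z w \<longleftrightarrow> w = leaf_nbr E z"
proof -
  obtain w0 where w0: "{u\<in>V. E z u} = {w0}"
    using z unfolding leaves_def deg_def by (auto simp: card_1_singleton_iff)
  then have adj: "E z w \<longleftrightarrow> w = w0" for w
    using simple_graph_adjD[OF sg, of z w] by auto
  then have "leaf_nbr E z = w0" unfolding leaf_nbr_def by blast
  then show ?thesis using adj by simp
qed

lemma tree_deg_pos:
  assumes t: "tree_by_degrees V E" and c: "2 \<le> card V" and v: "v \<in> V"
  shows "0 < deg V E v"
proof -
  have "\<not> V \<subseteq> {v}"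
  proof
    assume "V \<subseteq> {v}"
    then have "card V \<le> 1" using card_mono[of "{v}" V] by simp
    with c show False by simp
  qed
  then obtain w where w: "w \<in> V" "w \<noteq> v" by blast
  have "E\<^sup>*\<^sup>* v w" using t v w unfolding tree_by_degrees_def connected_def by auto
  then obtain y where "E v y" using w(2) by (metis converse_rtranclpE)
  then show ?thesis using deg_pos_iff[OF tree_by_degrees_simple[OF t]] by auto
qed

lemma tree_leaves_inner:
  assumes t: "tree_by_degrees V E" and c: "2 \<le> card V"
  shows "leaves V E \<union> inner V E = V" and "leaves V E \<inter> inner V E = {}"
    and "card V = card (leaves V E) + card (inner V E)"
    and "(\<Sum>v\<in>V. deg V E v) = card (leaves V E) + (\<Sum>v\<in>inner V E. deg V E v)"
    and "2 \<le> card (leaves V E)"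
proof -
  have fV: "finite V" using simple_graph_finite[OF tree_by_degrees_simple[OF t]] .
  show U: "leaves V E \<union> inner V E = V" using tree_deg_pos[OF t c]
    unfolding leaves_def inner_def by force
  show D: "leaves V E \<inter> inner V E = {}" unfolding leaves_def inner_def by auto
  have fl: "finite (leaves V E)" "finite (inner V E)" using fV U by (metis finite_Un)+
  show cV: "card V = card (leaves V E) + card (inner V E)"
    using card_Un_disjoint[OF fl D] U by simp
  have "(\<Sum>v\<in>V. deg V E v) = (\<Sum>v\<in>leaves V E. deg V E v) + (\<Sum>v\<in>inner V E. deg V E v)"
    using sum.union_disjoint[OF fl D] U by simp
  then show S: "(\<Sum>v\<in>V. deg V E v) = card (leaves V E) + (\<Sum>v\<in>inner V E. deg V E v)"
    unfolding leaves_def by simp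
  have "2 * card (inner V E) \<le> (\<Sum>v\<in>inner V E. deg V E v)"
    using sum_mono[of "inner V E" "\<lambda>_. 2" "deg V E"] by (auto simp: inner_def)
  moreover have "(\<Sum>v\<in>V. deg V E v) = 2 * (card V - 1)" using t tree_by_degrees_def by auto
  ultimately show "2 \<le> card (leaves V E)" using S cV c by linarith
qed

lemma adjacent_leaves_imp_two_vertices:
  assumes t: "tree_by_degrees V E" and x: "x \<in> leaves V E" and y: "y \<in> leaves V E"
    and xy: "E x y"
  shows "V = {x, y}"
proof -
  have sg: "simple_graph V E" using tree_by_degrees_simple[OF t] .
  have closed: "z' \<in> {x,y}" if "z \<in> {x,y}" "E z z'" for z z'
    using that xy leaf_adj_iff[OF sg x, of z'] leaf_adj_iff[OF sg x, of y]
      leaf_adj_iff[OF sg y, of z'] leaf_adj_iff[OF sg y, of x] simple_graph_adj_sym[OF sg, of x y]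
    by auto
  have "z \<in> {x,y}" if "E\<^sup>*\<^sup>* x z" for z
    using that by (induction rule: rtranclp_induct) (use closed in blast)+
  moreover have "x \<in> V" "y \<in> V" using x y by (auto simp: leaves_def)
  ultimately show ?thesis
    using t unfolding tree_by_degrees_def connected_def by blast
qed

lemma leaf_nbr_inner:
  assumes t: "tree_by_degrees V E" and c: "3 \<le> card V" and z: "z \<in> leaves V E"
  shows "leaf_nbr E z \<in> inner V E"
proof -
  have sg: "simple_graph V E" using tree_by_degrees_simple[OF t] .
  have e: "E z (leaf_nbr E z)" using leaf_adj_iff[OF sg z] by simp
  have "leaf_nbr E z \<notin> leaves V E"
  proof
    assume "leaf_nbr E z \<in> leaves V E"
    then have "V = {z, leaf_nbr E z}" using adjacent_leaves_imp_two_vertices[OF t z _ e] by simp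
    then have "card V \<le> 2" by (simp add: card_insert_if)
    then show False using c by simp
  qed
  then show ?thesis using tree_leaves_inner(1)[OF t] c simple_graph_adjD[OF sg e] by auto
qed

section \<open>Pruning and eccentricity\<close>

lemma deg_prune: "v \<in> inner V E \<Longrightarrow> deg (inner V E) (prune V E) v = card {w\<in>inner V E. E v w}"
  unfolding deg_def prune_def by (rule arg_cong[where f=card]) auto

lemma deg_eq_inner_plus_leaf_nbrs:
  assumes t: "tree_by_degrees V E" and c: "2 \<le> card V"
  shows "deg V E v = card {w\<in>inner V E. E v w} + card {w\<in>leaves V E. E v w}"
proof -
  have fV: "finite V" using simple_graph_finite[OF tree_by_degrees_simple[OF t]] .
  have "{w\<in>V. E v w} = {w\<in>inner V E. E v w} \<union> {w\<in>leaves V E. E v w}"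
    using tree_leaves_inner(1)[OF t c] by auto
  moreover have "finite {w\<in>inner V E. E v w}" "finite {w\<in>leaves V E. E v w}"
    using fV unfolding inner_def leaves_def by auto
  moreover have "{w\<in>inner V E. E v w} \<inter> {w\<in>leaves V E. E v w} = {}"
    using tree_leaves_inner(2)[OF t c] by auto
  ultimately show ?thesis unfolding deg_def by (simp add: card_Un_disjoint)
qed

text \<open>A walk between inner vertices that visits a leaf must return at once to the vertex it
  came from, so such detours can be cut out.\<close>
lemma relpowp_imp_rtranclp_prune:
  assumes t: "tree_by_degrees V E" and c: "2 \<le> card V"
  shows "(E ^^ j) u v \<Longrightarrow> u \<in> inner V E \<Longrightarrow> v \<in> inner V E \<Longrightarrow> (prune V E)\<^sup>*\<^sup>* u v"
proof (induction j arbitrary: u rule: less_induct)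
  case (less j)
  have sg: "simple_graph V E" using tree_by_degrees_simple[OF t] .
  show ?case
  proof (cases j)
    case 0 then show ?thesis using less.prems by simp
  next
    case (Suc j')
    then obtain x where ux: "E u x" and xv: "(E ^^ j') x v"
      using less.prems(1) relpowp_Suc_D2 by metis
    show ?thesis
    proof (cases "x \<in> inner V E")
      case True
      then have "(prune V E)\<^sup>*\<^sup>* x v" using less.IH[OF _ xv] Suc less.prems by auto
      moreover have "prune V E u x" using ux True less.prems unfolding prune_def by auto
      ultimately show ?thesis by (meson converse_rtranclp_into_rtranclp)
    next
      case False
      then have xL: "x \<in> leaves V E"
        using tree_leaves_inner(1)[OF t c] simple_graph_adjD[OF sg ux] by auto
      then have "x \<noteq> v" using False less.prems by auto
      then obtain j'' where j'': "j' = Suc j''" using xv by (cases j') auto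
      then obtain y where xy: "E x y" and yv: "(E ^^ j'') y v" using xv relpowp_Suc_D2 by metis
      have "y = u" using xy ux leaf_adj_iff[OF sg xL] simple_graph_adj_sym[OF sg] by metis
      then show ?thesis using less.IH[of j'' u] yv j'' Suc less.prems by auto
    qed
  qed
qed

lemma connected_prune:
  assumes t: "tree_by_degrees V E" and c: "2 \<le> card V"
  shows "connected (inner V E) (prune V E)"
  unfolding connected_def
proof (intro ballI)
  fix u v assume uv: "u \<in> inner V E" "v \<in> inner V E"
  then obtain j where "(E ^^ j) u v"
    using t unfolding tree_by_degrees_def connected_def inner_def
    by (metis (no_types, lifting) mem_Collect_eq rtranclp_imp_relpowp)
  then show "(prune V E)\<^sup>*\<^sup>* u v" using relpowp_imp_rtranclp_prune[OF t c] uv by blast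
qed

lemma sum_deg_inner_eq_sum_deg_prune:
  assumes t: "tree_by_degrees V E" and c: "3 \<le> card V"
  shows "(\<Sum>v\<in>inner V E. deg V E v)
    = (\<Sum>v\<in>inner V E. deg (inner V E) (prune V E) v) + card (leaves V E)"
proof -
  have sg: "simple_graph V E" using tree_by_degrees_simple[OF t] .
  have c2: "2 \<le> card V" using c by simp
  have fin: "finite (inner V E)" "finite (leaves V E)"
    using simple_graph_finite[OF sg] by (auto simp: inner_def leaves_def)
  have "(\<Sum>v\<in>inner V E. card {w\<in>leaves V E. E v w}) = 1 * card (leaves V E)"
  proof (rule sum_multicount[OF fin], rule ballI)
    fix w assume w: "w \<in> leaves V E"
    have "{v\<in>inner V E. E v w} = {leaf_nbr E w}"
      using leaf_nbr_inner[OF t c w] leaf_adj_iff[OF sg w] simple_graph_adj_sym[OF sg] by blast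
    then show "card {v\<in>inner V E. E v w} = 1" by simp
  qed
  then show ?thesis
    using deg_eq_inner_plus_leaf_nbrs[OF t c2] deg_prune[of _ V E] by (simp add: sum.distrib)
qed

lemma tree_prune:
  assumes t: "tree_by_degrees V E" and c: "3 \<le> card V"
  shows "tree_by_degrees (inner V E) (prune V E)"
proof -
  have sg: "simple_graph V E" using tree_by_degrees_simple[OF t] .
  have c2: "2 \<le> card V" using c by simp
  have fin: "finite (inner V E)"
    using simple_graph_finite[OF sg] by (auto simp: inner_def)
  have sg_prune: "simple_graph (inner V E) (prune V E)"
    using sg fin unfolding simple_graph_def prune_def by auto
  have sum: "(\<Sum>v\<in>V. deg V E v) = 2 * (card V - 1)" using t tree_by_degrees_def by auto
  have ne: "inner V E \<noteq> {}"
    using tree_leaves_inner(3,4)[OF t c2] sum c by (cases "inner V E = {}") auto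
  have "(\<Sum>v\<in>inner V E. deg (inner V E) (prune V E) v) = 2 * (card (inner V E) - 1)"
    using sum_deg_inner_eq_sum_deg_prune[OF t c] tree_leaves_inner(3,4)[OF t c2] sum ne fin
    by (simp add: card_gt_0_iff)
  then show ?thesis unfolding tree_by_degrees_def using sg_prune ne connected_prune[OF t c2] by auto
qed

definition ecc_le :: "'a set \<Rightarrow> ('a \<Rightarrow> 'a \<Rightarrow> bool) \<Rightarrow> nat \<Rightarrow> 'a \<Rightarrow> bool" where
  "ecc_le V E j c \<longleftrightarrow> c \<in> V \<and> (\<forall>v\<in>V. dist_le E j c v)"

lemma ecc_le_mono: "ecc_le V E j c \<Longrightarrow> j \<le> j' \<Longrightarrow> ecc_le V E j' c"
  unfolding ecc_le_def dist_le_def by (meson order.trans)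

lemma ecc_le_prune_imp_ecc_le_Suc:
  assumes t: "tree_by_degrees V E" and c: "3 \<le> card V" and d: "ecc_le (inner V E) (prune V E) j c"
  shows "ecc_le V E (Suc j) c"
proof -
  have sg: "simple_graph V E" using tree_by_degrees_simple[OF t] .
  have U: "leaves V E \<union> inner V E = V" using tree_leaves_inner(1)[OF t] c by auto
  have inner_close: "\<exists>i\<le>j. (E ^^ i) c w" if "w \<in> inner V E" for w
  proof -
    have "dist_le (prune V E) j c w" using d that by (simp add: ecc_le_def)
    then show ?thesis
      unfolding dist_le_def prune_def by (metis (mono_tags, lifting) relpowp_mono)
  qed
  have "dist_le E (Suc j) c v" if v: "v \<in> V" for v
  proof (cases "v \<in> inner V E")
    case True
    then show ?thesis using inner_close unfolding dist_le_def by (meson le_SucI)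
  next
    case False
    then have vL: "v \<in> leaves V E" using U v by auto
    obtain i where i: "i \<le> j" "(E ^^ i) c (leaf_nbr E v)"
      using inner_close leaf_nbr_inner[OF t c vL] by blast
    have "E (leaf_nbr E v) v" using leaf_adj_iff[OF sg vL] simple_graph_adj_sym[OF sg] by metis
    then have "(E ^^ Suc i) c v" using i relpowp_Suc_I by metis
    then show ?thesis unfolding dist_le_def using i(1) by (meson Suc_le_mono)
  qed
  then show ?thesis using d U by (auto simp: ecc_le_def)
qed

lemma ecc_le_1_if_card_le_2:
  assumes t: "tree_by_degrees V E" and c: "card V \<le> 2" and cV: "c \<in> V"
  shows "ecc_le V E 1 c"
proof -
  have sg: "simple_graph V E" using tree_by_degrees_simple[OF t] .
  have "dist_le E 1 c v" if v: "v \<in> V" and vc: "v \<noteq> c" for v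
  proof -
    have sub: "{c, v} \<subseteq> V" using cV v by auto
    then have "card {c, v} = card V" using card_mono[OF simple_graph_finite[OF sg] sub] c vc by simp
    then have V: "V = {c, v}" using card_subset_eq[OF simple_graph_finite[OF sg] sub] by simp
    then obtain w where w: "E c w" using tree_deg_pos[OF t _ cV] deg_pos_iff[OF sg] vc by auto
    then have "w = v" using simple_graph_adjD[OF sg w] V by auto
    then show ?thesis using w unfolding dist_le_def by (intro exI[of _ 1]) auto
  qed
  moreover have "dist_le E 1 c c" unfolding dist_le_def by (intro exI[of _ 0]) auto
  ultimately show ?thesis using cV by (auto simp: ecc_le_def)
qed

lemma no_ecc_le_prune:
  assumes t: "tree_by_degrees V E" and c: "3 \<le> card V" and nc: "\<forall>c\<in>V. \<not> ecc_le V E (Suc j) c"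
  shows "\<forall>c\<in>inner V E. \<not> ecc_le (inner V E) (prune V E) j c"
  using ecc_le_prune_imp_ecc_le_Suc[OF t c] nc ecc_le_def by metis

text \<open>Each pruning removes at least two leaves and lowers every eccentricity by one.\<close>
lemma card_ge_if_no_ecc_le:
  "tree_by_degrees V E \<Longrightarrow> (\<forall>c\<in>V. \<not> ecc_le V E j c) \<Longrightarrow> 2*j + 2 \<le> card V"
proof (induction j arbitrary: V E)
  case 0
  obtain c where c: "c \<in> V" using 0 by (auto simp: tree_by_degrees_def)
  then obtain v where v: "v \<in> V" "\<not> dist_le E 0 c v" using 0 by (auto simp: ecc_le_def)
  then have "v \<noteq> c" unfolding dist_le_def by auto
  moreover have "card {c,v} \<le> card V"
    using c v simple_graph_finite[OF tree_by_degrees_simple[OF "0.prems"(1)]]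
    by (intro card_mono) auto
  ultimately show ?case by simp
next
  case (Suc j)
  have c3: "3 \<le> card V"
  proof (rule ccontr)
    assume "\<not> 3 \<le> card V"
    moreover obtain c where c: "c \<in> V" using Suc.prems by (auto simp: tree_by_degrees_def)
    ultimately have "ecc_le V E (Suc j) c"
      using ecc_le_1_if_card_le_2[OF Suc.prems(1)] ecc_le_mono by fastforce
    then show False using Suc.prems c by auto
  qed
  have "2*j+2 \<le> card (inner V E)"
    using Suc.IH[OF tree_prune[OF Suc.prems(1) c3]] no_ecc_le_prune[OF Suc.prems(1) c3 Suc.prems(2)]
    by blast
  then show ?case using tree_leaves_inner(3,5)[OF Suc.prems(1)] c3 by simp
qed

section \<open>Isomorphisms and the trees T^a_{n,k,2}\<close>

lemma graph_iso_if_enum: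
  assumes b: "bij_betw \<phi> W V" and adj: "\<forall>i\<in>W. \<forall>i'\<in>W. E (\<phi> i) (\<phi> i') \<longleftrightarrow> F i i'"
  shows "graph_iso V E W F"
proof -
  define f where "f = inv_into W \<phi>"
  have bf: "bij_betw f V W" using bij_betw_inv_into[OF b] f_def by simp
  have "\<phi> (f u) = u" if "u \<in> V" for u using b f_def that by (simp add: bij_betw_inv_into_right)
  then have "\<forall>u\<in>V. \<forall>v\<in>V. E u v \<longleftrightarrow> F (f u) (f v)"
    using adj bij_betwE[OF bf] by metis
  then show ?thesis unfolding graph_iso_def using bf by blast
qed

lemma graph_iso_imp_enum:
  assumes "graph_iso V E W F"
  obtains \<phi> where "bij_betw \<phi> W V" "\<forall>i\<in>W. \<forall>i'\<in>W. E (\<phi> i) (\<phi> i') \<longleftrightarrow> F i i'"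
proof -
  obtain f where bf: "bij_betw f V W" and e: "\<forall>u\<in>V. \<forall>v\<in>V. E u v \<longleftrightarrow> F (f u) (f v)"
    using assms graph_iso_def by metis
  define \<phi> where "\<phi> = inv_into V f"
  have b: "bij_betw \<phi> W V" using bij_betw_inv_into[OF bf] \<phi>_def by simp
  have "f (\<phi> i) = i" if "i \<in> W" for i using bf \<phi>_def that by (simp add: bij_betw_inv_into_right)
  then have "\<forall>i\<in>W. \<forall>i'\<in>W. E (\<phi> i) (\<phi> i') \<longleftrightarrow> F i i'"
    using e bij_betwE[OF b] by metis
  then show ?thesis using b that by blast
qed

lemma graph_iso_trans:
  assumes "graph_iso V E W F" "graph_iso W F U G" shows "graph_iso V E U G"
proof -
  obtain f where bf: "bij_betw f V W" and e: "\<forall>u\<in>V. \<forall>v\<in>V. E u v \<longleftrightarrow> F (f u) (f v)"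
    using assms(1) graph_iso_def by metis
  obtain h where bh: "bij_betw h W U" and e2: "\<forall>u\<in>W. \<forall>v\<in>W. F u v \<longleftrightarrow> G (h u) (h v)"
    using assms(2) graph_iso_def by metis
  have "bij_betw (h \<circ> f) V U" using bf bh bij_betw_trans by blast
  moreover have "\<forall>u\<in>V. \<forall>v\<in>V. E u v \<longleftrightarrow> G ((h \<circ> f) u) ((h \<circ> f) v)"
    using e e2 bij_betwE[OF bf] by auto
  ultimately show ?thesis unfolding graph_iso_def by blast
qed

lemma deg_graph_iso:
  assumes bf: "bij_betw f V W" and e: "\<forall>u\<in>V. \<forall>v\<in>V. E u v \<longleftrightarrow> F (f u) (f v)" and u: "u \<in> V"
  shows "deg V E u = deg W F (f u)"
proof -
  have "f ` {w\<in>V. E u w} = {w'\<in>W. F (f u) w'}"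
  proof
    show "f ` {w\<in>V. E u w} \<subseteq> {w'\<in>W. F (f u) w'}" using bf e u bij_betwE by fastforce
    show "{w'\<in>W. F (f u) w'} \<subseteq> f ` {w\<in>V. E u w}"
      using bf e u unfolding bij_betw_def by auto
  qed
  moreover have "inj_on f {w\<in>V. E u w}"
    using bf unfolding bij_betw_def by (auto intro: inj_on_subset)
  ultimately show ?thesis unfolding deg_def by (metis card_image)
qed

lemma Pi_graph_iso:
  assumes "graph_iso V E W F"
  shows "Pi1 V E = Pi1 W F" and "Pi2 V E = Pi2 W F"
proof -
  obtain f where bf: "bij_betw f V W" and e: "\<forall>u\<in>V. \<forall>v\<in>V. E u v \<longleftrightarrow> F (f u) (f v)"
    using assms unfolding graph_iso_def by blast
  have d: "deg V E u = deg W F (f u)" if "u \<in> V" for u using deg_graph_iso[OF bf e that] .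
  show "Pi1 V E = Pi1 W F" unfolding Pi1_def
    using prod.reindex_bij_betw[OF bf, of "\<lambda>w. deg W F w ^ 2"] d by simp
  show "Pi2 V E = Pi2 W F" unfolding Pi2_def
    using prod.reindex_bij_betw[OF bf, of "\<lambda>w. deg W F w ^ deg W F w"] d by simp
qed

text \<open>Reversing the path v_0 ... v_{2K+1} maps the tree with pendent vertices at v_a onto the
  one with pendent vertices at v_{2K+1-a}.\<close>
lemma graph_iso_T_edge_reflect:
  assumes "1 \<le> a" "a \<le> 2*K" "2*K+2 \<le> n"
  shows "graph_iso {..<n} (T_edge n K a) {..<n} (T_edge n K (2*K+1-a))"
proof -
  define \<rho> where "\<rho> i = (if i \<le> 2*K+1 then 2*K+1-i else i)" for i
  have "bij_betw \<rho> {..<n} {..<n}"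
    by (rule bij_betw_byWitness[where f'=\<rho>]) (use assms in \<open>auto simp: \<rho>_def\<close>)
  moreover have "\<forall>u\<in>{..<n}. \<forall>v\<in>{..<n}. T_edge n K a u v \<longleftrightarrow> T_edge n K (2*K+1-a) (\<rho> u) (\<rho> v)"
    using assms unfolding T_edge_def \<rho>_def by auto
  ultimately show ?thesis unfolding graph_iso_def by blast
qed

lemma T_edge_sym: "T_edge n K a u v \<longleftrightarrow> T_edge n K a v u"
  unfolding T_edge_def by auto

lemma T_edge_leaf_iff:
  assumes "1 \<le> a" "a \<le> 2*K" "2*K+2 \<le> n" and "i < n" "j < n" and "i = 0 \<or> 2*K+1 \<le> i"
  shows "T_edge n K a i j \<longleftrightarrow> j = (if i = 0 then 1 else if i = 2*K+1 then 2*K else a)"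
proof -
  consider "i = 0" | "i = 2*K+1" | "2*K+2 \<le> i" using assms(6) by linarith
  then show ?thesis using assms(1-5) by cases (auto simp: T_edge_def)
qed

lemma deg_T_edge:
  assumes a: "1 \<le> a" "a \<le> 2*K" and n: "2*K+2 \<le> n" and u: "u < n"
  shows "deg {..<n} (T_edge n K a) u =
    (if u = a then n - 2*K else if 1 \<le> u \<and> u \<le> 2*K then 2 else 1)"
proof -
  let ?N = "{v\<in>{..<n}. T_edge n K a u v}"
  consider "u = a" | "u \<noteq> a" "1 \<le> u" "u \<le> 2*K" | "u = 0" | "u = 2*K+1" | "2*K+2 \<le> u"
    by linarith
  then show ?thesis
  proof cases
    case 1
    then have "?N = {a-1, a+1} \<union> {2*K+2..<n}" using a n unfolding T_edge_def by auto
    moreover have "card ({a-1, a+1} \<union> {2*K+2..<n}) = 2 + (n - (2*K+2))"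
      using a by (subst card_Un_disjoint) auto
    ultimately show ?thesis using 1 n unfolding deg_def by simp
  next
    case 2
    then have "?N = {u-1, u+1}" using n unfolding T_edge_def by auto
    then show ?thesis using 2 unfolding deg_def by simp
  next
    case 3
    then have "?N = {1}" using a n unfolding T_edge_def by auto
    then show ?thesis using 3 a unfolding deg_def by simp
  next
    case 4
    then have "?N = {2*K}" using a n unfolding T_edge_def by auto
    then show ?thesis using 4 a unfolding deg_def by simp
  next
    case 5
    then have "?N = {a}" using a u unfolding T_edge_def by auto
    then show ?thesis using 5 a unfolding deg_def by simp
  qed
qed

lemma prod_deg_T_edge:
  assumes a: "1 \<le> a" "a \<le> 2*K" and n: "2*K+2 \<le> n" and h1: "h 1 = (1::nat)"
  shows "(\<Prod>u\<in>{..<n}. h (deg {..<n} (T_edge n K a) u)) = h (n - 2*K) * h 2 ^ (2*K-1)"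
proof -
  let ?d = "\<lambda>u. deg {..<n} (T_edge n K a) u"
  have "(\<Prod>u\<in>{..<n}. h (?d u)) = (\<Prod>u\<in>{1..2*K}. h (?d u))"
    by (rule prod.mono_neutral_right) (use n h1 deg_T_edge[OF a n] a in auto)
  also have "\<dots> = h (?d a) * (\<Prod>u\<in>{1..2*K} - {a}. h (?d u))"
    using a by (intro prod.remove) auto
  also have "(\<Prod>u\<in>{1..2*K} - {a}. h (?d u)) = (\<Prod>u\<in>{1..2*K} - {a}. h 2)"
    by (rule prod.cong) (use deg_T_edge[OF a n] n in auto)
  also have "\<dots> = h 2 ^ (2*K-1)" using a by simp
  also have "?d a = n - 2*K" using deg_T_edge[OF a n, of a] a n by simp
  finally show ?thesis .
qed

lemma Pi_T_edge:
  assumes "1 \<le> a" "a \<le> 2*K" and "2*K+2 \<le> n"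
  shows "Pi1 {..<n} (T_edge n K a) = 4^(2*K-1) * (n - 2*K)^2"
    and "Pi2 {..<n} (T_edge n K a) = 4^(2*K-1) * (n - 2*K)^(n - 2*K)"
  using prod_deg_T_edge[OF assms, of "\<lambda>d. d^2"] prod_deg_T_edge[OF assms, of "\<lambda>d. d^d"]
  by (simp_all add: Pi1_def Pi2_def power_mult[symmetric] mult.commute)

section \<open>Trees whose inner vertices form a path\<close>

definition path_enum :: "'a set \<Rightarrow> ('a \<Rightarrow> 'a \<Rightarrow> bool) \<Rightarrow> nat \<Rightarrow> (nat \<Rightarrow> 'a) \<Rightarrow> bool" where
  "path_enum V E N p \<longleftrightarrow>
     bij_betw p {..<N} V \<and> (\<forall>i<N. \<forall>j<N. E (p i) (p j) \<longleftrightarrow> (i = Suc j \<or> j = Suc i))"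

definition at_most_one_branch :: "'a set \<Rightarrow> ('a \<Rightarrow> 'a \<Rightarrow> bool) \<Rightarrow> bool" where
  "at_most_one_branch V E \<longleftrightarrow> (\<forall>u\<in>V. \<forall>v\<in>V. 3 \<le> deg V E u \<longrightarrow> 3 \<le> deg V E v \<longrightarrow> u = v)"

lemma inner_vertex_has_leaf_nbr:
  assumes t: "tree_by_degrees V E" and c: "2 \<le> card V" and v: "v \<in> inner V E"
    and only: "{w\<in>inner V E. E v w} \<subseteq> {u}"
  obtains x where "x \<in> leaves V E" "E v x"
proof -
  have "card {w\<in>inner V E. E v w} \<le> 1" using card_mono[OF _ only] by simp
  moreover have "2 \<le> deg V E v" using v by (simp add: inner_def)
  ultimately have "card {w\<in>leaves V E. E v w} \<noteq> 0"
    using deg_eq_inner_plus_leaf_nbrs[OF t c, of v] by linarith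
  then have "{w\<in>leaves V E. E v w} \<noteq> {}" by (metis card.empty)
  then show ?thesis using that by blast
qed

context
  fixes V :: "'a set" and E :: "'a \<Rightarrow> 'a \<Rightarrow> bool" and K :: nat and p :: "nat \<Rightarrow> 'a"
  assumes tree: "tree_by_degrees V E" and K: "1 \<le> K" and spine: "path_enum (inner V E) E (2*K) p"
begin

lemma spine_inner: "i < 2*K \<Longrightarrow> p i \<in> inner V E"
  using spine bij_betwE unfolding path_enum_def by blast

lemma spine_inj: "i < 2*K \<Longrightarrow> j < 2*K \<Longrightarrow> p i = p j \<longleftrightarrow> i = j"
  using spine unfolding path_enum_def bij_betw_def inj_on_def by auto

lemma spine_surj: "v \<in> inner V E \<Longrightarrow> \<exists>i<2*K. v = p i"
  using spine unfolding path_enum_def bij_betw_def by auto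

lemma spine_adj: "i < 2*K \<Longrightarrow> j < 2*K \<Longrightarrow> E (p i) (p j) \<longleftrightarrow> (i = Suc j \<or> j = Suc i)"
  using spine unfolding path_enum_def by auto

lemma spine_card: shows "card V = card (leaves V E) + 2*K" and "2*K + 2 \<le> card V"
proof -
  have sg: "simple_graph V E" using tree_by_degrees_simple[OF tree] .
  have ci: "card (inner V E) = 2*K"
    using spine bij_betw_same_card unfolding path_enum_def by fastforce
  have "card (inner V E) \<le> card V"
    using simple_graph_finite[OF sg] by (intro card_mono) (auto simp: inner_def)
  then have "2 \<le> card V" using ci K by simp
  then show "card V = card (leaves V E) + 2*K" and "2*K + 2 \<le> card V"
    using tree_leaves_inner(3,5)[OF tree] ci by auto
qed

lemma spine_end_leaves:
  obtains x y where "x \<in> leaves V E" "E (p 0) x" "y \<in> leaves V E" "E (p (2*K-1)) y" "x \<noteq> y"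
proof -
  have c: "2 \<le> card V" using spine_card(2) by simp
  have ends: "0 < 2*K" "2*K - 1 < 2*K" using K by auto
  have "{w\<in>inner V E. E (p 0) w} \<subseteq> {p 1}"
    using spine_surj spine_adj K by fastforce
  then obtain x where x: "x \<in> leaves V E" "E (p 0) x"
    by (rule inner_vertex_has_leaf_nbr[OF tree c spine_inner[OF ends(1)]])
  have "{w\<in>inner V E. E (p (2*K-1)) w} \<subseteq> {p (2*K-2)}"
  proof
    fix w assume "w \<in> {w\<in>inner V E. E (p (2*K-1)) w}"
    then obtain j where "j < 2*K" "w = p j" "E (p (2*K-1)) (p j)" using spine_surj by blast
    moreover have "j = 2*K-2" using calculation spine_adj[of "2*K-1" j] K by auto
    ultimately show "w \<in> {p (2*K-2)}" by simp
  qed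
  then obtain y where y: "y \<in> leaves V E" "E (p (2*K-1)) y"
    by (rule inner_vertex_has_leaf_nbr[OF tree c spine_inner[OF ends(2)]])
  have sg: "simple_graph V E" using tree_by_degrees_simple[OF tree] .
  have "x \<noteq> y"
    using x y leaf_adj_iff[OF sg] simple_graph_adj_sym[OF sg] spine_inj[of 0 "2*K-1"] K by force
  then show ?thesis using that x y by blast
qed

text \<open>A spine end already has a spine neighbour and its end leaf, an interior spine vertex two
  spine neighbours, so any further leaf raises the degree to at least 3.\<close>
lemma spine_extra_leaf_branch:
  assumes x: "x \<in> leaves V E" "E (p 0) x" and y: "y \<in> leaves V E" "E (p (2*K-1)) y"
    and r: "r \<in> leaves V E - {x, y}"
  shows "3 \<le> deg V E (leaf_nbr E r)"
proof -
  have sg: "simple_graph V E" using tree_by_degrees_simple[OF tree] .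
  have "3 \<le> card V" using spine_card(2) K by simp
  then have "leaf_nbr E r \<in> inner V E" using leaf_nbr_inner[OF tree] r by simp
  then obtain i where i: "i < 2*K" "leaf_nbr E r = p i" using spine_surj by blast
  have Er: "E (p i) r" using leaf_adj_iff[OF sg, of r] r i simple_graph_adj_sym[OF sg] by auto
  have leaf_not_spine: "p j \<notin> leaves V E" if "j < 2*K" for j
    using spine_inner[OF that] by (auto simp: inner_def leaves_def)
  have three: "3 \<le> deg V E (p i)" if "{u, w, r} \<subseteq> {w. E (p i) w}" "u \<noteq> w" "u \<noteq> r" "w \<noteq> r" for u w
    using card_le_deg[OF sg that(1)] that(2-4) by simp
  consider "i = 0" | "i = 2*K-1" "i \<noteq> 0" | "0 < i" "i < 2*K-1" using i by linarith
  then show ?thesis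
  proof cases
    case 1
    then show ?thesis using three[of "p 1" x] spine_adj[of 0 1] leaf_not_spine[of 1] x r Er i K
      by auto
  next
    case 2
    then show ?thesis using three[of "p (2*K-2)" y] spine_adj[of "2*K-1" "2*K-2"]
        leaf_not_spine[of "2*K-2"] y r Er i K by auto
  next
    case 3
    then have lt: "i - 1 < 2*K" "i + 1 < 2*K" by auto
    have "{p (i-1), p (i+1), r} \<subseteq> {w. E (p i) w}"
      using spine_adj[OF i(1) lt(1)] spine_adj[OF i(1) lt(2)] Er 3 by auto
    moreover have "p (i-1) \<noteq> p (i+1)" using spine_inj[OF lt] 3 by simp
    ultimately show ?thesis
      using three leaf_not_spine[OF lt(1)] leaf_not_spine[OF lt(2)] r by (auto simp: i(2))
  qed
qed


context
  fixes x y :: 'a and b :: nat and g :: "nat \<Rightarrow> 'a"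
  assumes x: "x \<in> leaves V E" "E (p 0) x" and y: "y \<in> leaves V E" "E (p (2*K-1)) y"
    and b: "b < 2*K"
    and hub: "\<forall>r\<in>leaves V E - {x, y}. leaf_nbr E r = p b"
    and g: "bij_betw g {2*K+2..<card V} (leaves V E - {x, y})"
begin

definition spine_enum :: "nat \<Rightarrow> 'a" where
  "spine_enum i = (if i = 0 then x else if i \<le> 2*K then p (i-1) else if i = 2*K+1 then y else g i)"

lemma spine_enum_bij: "bij_betw spine_enum {..<card V} V"
proof -
  have c: "2 \<le> card V" using spine_card(2) by simp
  have LV: "leaves V E \<subseteq> V" by (auto simp: leaves_def)
  have gR: "g i \<in> leaves V E - {x, y}" if "2*K+2 \<le> i" "i < card V" for i
    using g that bij_betwE by fastforce
  have "spine_enum ` {..<card V} \<subseteq> V"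
    using gR spine_inner x y LV by (auto simp: spine_enum_def inner_def)
  moreover have "V \<subseteq> spine_enum ` {..<card V}"
  proof
    fix v assume v: "v \<in> V"
    consider "v \<in> inner V E" | "v = x" | "v = y" | "v \<in> leaves V E - {x, y}"
      using tree_leaves_inner(1)[OF tree c] v by blast
    then show "v \<in> spine_enum ` {..<card V}"
    proof cases
      case 1
      then obtain i where "i < 2*K" "v = p i" using spine_surj by blast
      then show ?thesis using spine_card(2)
        by (intro rev_image_eqI[of "Suc i"]) (auto simp: spine_enum_def)
    next
      case 2
      then show ?thesis using c by (intro rev_image_eqI[of 0]) (auto simp: spine_enum_def)
    next
      case 3
      then show ?thesis using spine_card(2)
        by (intro rev_image_eqI[of "2*K+1"]) (auto simp: spine_enum_def)
    next
      case 4
      then obtain i where "i \<in> {2*K+2..<card V}" "v = g i"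
        using g unfolding bij_betw_def by (metis imageE)
      then show ?thesis by (intro rev_image_eqI[of i]) (auto simp: spine_enum_def)
    qed
  qed
  ultimately have img: "spine_enum ` {..<card V} = V" by blast
  then have "inj_on spine_enum {..<card V}" by (intro eq_card_imp_inj_on) auto
  then show ?thesis using img unfolding bij_betw_def by blast
qed

lemma spine_enum_leaf:
  assumes i: "i < card V" "i = 0 \<or> 2*K+1 \<le> i"
  defines "m \<equiv> if i = 0 then 1 else if i = 2*K+1 then 2*K else Suc b"
  shows "spine_enum i \<in> leaves V E" and "leaf_nbr E (spine_enum i) = spine_enum m" and "m < card V"
proof -
  have sg: "simple_graph V E" using tree_by_degrees_simple[OF tree] .
  have nbr: "leaf_nbr E z = p j" if "z \<in> leaves V E" "E (p j) z" for z j
    using that leaf_adj_iff[OF sg] simple_graph_adj_sym[OF sg] by metis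
  have gR: "g i \<in> leaves V E - {x, y}" if "2*K+2 \<le> i" "i < card V" for i
    using g that bij_betwE by fastforce
  have "spine_enum i \<in> leaves V E \<and> leaf_nbr E (spine_enum i) = spine_enum m"
  proof -
    consider "i = 0" | "i = 2*K+1" | "2*K+2 \<le> i" using i by linarith
    then show ?thesis
    proof cases
      case 1 then show ?thesis using x nbr[OF x] K by (simp add: spine_enum_def m_def)
    next
      case 2 then show ?thesis using y nbr[OF y] K by (simp add: spine_enum_def m_def)
    next
      case 3
      then have "spine_enum i = g i" "g i \<in> leaves V E - {x, y}"
        using gR[OF 3 i(1)] by (auto simp: spine_enum_def)
      then show ?thesis using hub b 3 by (auto simp: spine_enum_def m_def)
    qed
  qed
  then show "spine_enum i \<in> leaves V E" and "leaf_nbr E (spine_enum i) = spine_enum m" by auto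
  show "m < card V" using spine_card(2) b by (auto simp: m_def)
qed

lemma spine_enum_leaf_adj:
  assumes i: "i < card V" "i = 0 \<or> 2*K+1 \<le> i" and j: "j < card V"
  shows "E (spine_enum i) (spine_enum j) \<longleftrightarrow>
    j = (if i = 0 then 1 else if i = 2*K+1 then 2*K else Suc b)"
proof -
  let ?m = "if i = 0 then 1 else if i = 2*K+1 then 2*K else Suc b"
  have sg: "simple_graph V E" using tree_by_degrees_simple[OF tree] .
  have "E (spine_enum i) (spine_enum j) \<longleftrightarrow> spine_enum j = spine_enum ?m"
    using leaf_adj_iff[OF sg spine_enum_leaf(1)[OF i]] spine_enum_leaf(2)[OF i] by simp
  also have "\<dots> \<longleftrightarrow> j = ?m"
    using spine_enum_bij j spine_enum_leaf(3)[OF i] unfolding bij_betw_def inj_on_def by auto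
  finally show ?thesis .
qed

lemma spine_enum_adj:
  assumes "i < card V" "j < card V"
  shows "E (spine_enum i) (spine_enum j) \<longleftrightarrow> T_edge (card V) K (Suc b) i j"
proof -
  have sg: "simple_graph V E" using tree_by_degrees_simple[OF tree] .
  have a: "1 \<le> Suc b" "Suc b \<le> 2*K" using b by auto
  consider "i = 0 \<or> 2*K+1 \<le> i" | "j = 0 \<or> 2*K+1 \<le> j" | "1 \<le> i" "i \<le> 2*K" "1 \<le> j" "j \<le> 2*K"
    by linarith
  then show ?thesis
  proof cases
    case 1
    then show ?thesis
      using spine_enum_leaf_adj[OF assms(1) 1 assms(2)] T_edge_leaf_iff[OF a spine_card(2) assms 1]
      by simp
  next
    case 2
    then show ?thesis
      using spine_enum_leaf_adj[OF assms(2) 2 assms(1)]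
        T_edge_leaf_iff[OF a spine_card(2) assms(2,1) 2]
        simple_graph_adj_sym[OF sg, of "spine_enum i"] T_edge_sym[of "card V" K "Suc b" i]
      by simp
  next
    case 3
    then have "E (spine_enum i) (spine_enum j) \<longleftrightarrow> (i - 1 = Suc (j - 1) \<or> j - 1 = Suc (i - 1))"
      using spine_adj[of "i-1" "j-1"] by (simp add: spine_enum_def)
    then show ?thesis using 3 assms by (auto simp: T_edge_def)
  qed
qed

lemma graph_iso_T_edge_spine: "graph_iso V E {..<card V} (T_edge (card V) K (Suc b))"
  using graph_iso_if_enum[OF spine_enum_bij] spine_enum_adj by blast

end

lemma graph_iso_T_edge_if_spine:
  assumes branch: "at_most_one_branch V E"
  shows "\<exists>a\<in>{1..2*K}. graph_iso V E {..<card V} (T_edge (card V) K a)"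
proof -
  have sg: "simple_graph V E" using tree_by_degrees_simple[OF tree] .
  have c3: "3 \<le> card V" using spine_card(2) K by simp
  obtain x y where x: "x \<in> leaves V E" "E (p 0) x" and y: "y \<in> leaves V E" "E (p (2*K-1)) y"
    and xy: "x \<noteq> y"
    using spine_end_leaves by blast
  define R where "R = leaves V E - {x, y}"
  obtain b where b: "b < 2*K" and hub: "\<forall>r\<in>R. leaf_nbr E r = p b"
  proof (cases "R = {}")
    case True
    then show ?thesis using that[of 0] K by auto
  next
    case False
    then obtain r0 where r0: "r0 \<in> R" by auto
    have nbr_branch: "leaf_nbr E r \<in> V \<and> 3 \<le> deg V E (leaf_nbr E r)" if "r \<in> R" for r
      using spine_extra_leaf_branch[OF x y] leaf_nbr_inner[OF tree c3] that
      by (auto simp: R_def inner_def)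
    obtain b where "b < 2*K" "leaf_nbr E r0 = p b"
      using spine_surj leaf_nbr_inner[OF tree c3] r0 by (metis DiffD1 R_def)
    moreover have "leaf_nbr E r = leaf_nbr E r0" if "r \<in> R" for r
      using branch nbr_branch[OF that] nbr_branch[OF r0] unfolding at_most_one_branch_def by blast
    ultimately show ?thesis using that by auto
  qed
  have "finite R" using simple_graph_finite[OF sg] by (auto simp: R_def leaves_def)
  moreover have "card {2*K+2..<card V} = card R"
    using spine_card(1) x(1) y(1) xy \<open>finite R\<close> by (simp add: R_def card_Diff_subset)
  ultimately obtain g where "bij_betw g {2*K+2..<card V} R"
    by (metis finite_same_card_bij finite_atLeastLessThan)
  then have "graph_iso V E {..<card V} (T_edge (card V) K (Suc b))"
    using graph_iso_T_edge_spine[OF x y b] hub unfolding R_def by blast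
  moreover have "Suc b \<in> {1..2*K}" using b by simp
  ultimately show ?thesis by blast
qed

end

lemma card_inner_ge_if_no_ecc_le:
  assumes t: "tree_by_degrees V E" and k: "1 \<le> k" and nc: "\<forall>c\<in>V. \<not> ecc_le V E k c"
  shows "2*k \<le> card (inner V E)"
proof -
  obtain j where j: "k = Suc j" using k by (cases k) auto
  have c3: "3 \<le> card V" using card_ge_if_no_ecc_le[OF t nc] k by simp
  show ?thesis
    using card_ge_if_no_ecc_le[OF tree_prune[OF t c3] no_ecc_le_prune[OF t c3 nc[unfolded j]]] j
    by simp
qed

lemma path_enum_prune:
  assumes "path_enum (inner V E) (prune V E) N p"
  shows "path_enum (inner V E) E N p"
proof -
  have "p i \<in> inner V E" if "i < N" for i
    using assms that bij_betwE unfolding path_enum_def by blast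
  then show ?thesis using assms unfolding path_enum_def prune_def by auto
qed

lemma path_enum_two_vertices:
  assumes t: "tree_by_degrees V E" and c: "card V = 2"
  shows "\<exists>p. path_enum V E 2 p"
proof -
  have sg: "simple_graph V E" using tree_by_degrees_simple[OF t] .
  obtain u v where uv: "V = {u, v}" "u \<noteq> v" using c card_2_iff by metis
  obtain w where "E u w" using tree_deg_pos[OF t] deg_pos_iff[OF sg] c uv by force
  then have Euv: "E u v" "E v u" using simple_graph_adjD[OF sg] uv by auto
  define p where "p i = (if i = 0 then u else v)" for i :: nat
  have "bij_betw p {..<2} V"
    by (rule bij_betw_byWitness[where f'="\<lambda>w. if w = u then 0 else 1"])
       (use uv in \<open>auto simp: p_def\<close>)
  moreover have "\<forall>i<2. \<forall>i'<2. E (p i) (p i') \<longleftrightarrow> (i = Suc i' \<or> i' = Suc i)"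
    unfolding p_def using Euv simple_graph_adjD[OF sg] by (auto simp: less_2_cases_iff)
  ultimately show ?thesis unfolding path_enum_def by blast
qed

lemma deg_le_2_if_two_leaves:
  assumes t: "tree_by_degrees V E" and c: "2 \<le> card V" and L: "card (leaves V E) = 2"
    and v: "v \<in> inner V E"
  shows "deg V E v \<le> 2"
proof (rule ccontr)
  assume "\<not> deg V E v \<le> 2"
  then have "(\<Sum>w\<in>inner V E. 2) < (\<Sum>w\<in>inner V E. deg V E w)"
    using v simple_graph_finite[OF tree_by_degrees_simple[OF t]]
    by (intro sum_strict_mono_ex1) (auto simp: inner_def)
  then show False
    using tree_leaves_inner(3,4)[OF t c] L t by (simp add: tree_by_degrees_def)
qed

lemma path_enum_if_graph_iso_T_edge:
  assumes n: "n = 2*K + 2" and iso: "graph_iso V E {..<n} (T_edge n K a)"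
  shows "\<exists>p. path_enum V E n p"
proof -
  obtain p where p: "bij_betw p {..<n} V"
    and adj: "\<forall>i\<in>{..<n}. \<forall>i'\<in>{..<n}. E (p i) (p i') \<longleftrightarrow> T_edge n K a i i'"
    using iso by (rule graph_iso_imp_enum)
  have "T_edge n K a i i' \<longleftrightarrow> (i = Suc i' \<or> i' = Suc i)" if "i < n" "i' < n" for i i'
    using that n unfolding T_edge_def by auto
  then show ?thesis using p adj unfolding path_enum_def by auto
qed

lemma path_enum_if_no_ecc_le:
  "tree_by_degrees V E \<Longrightarrow> (\<forall>c\<in>V. \<not> ecc_le V E j c) \<Longrightarrow> card V = 2*j + 2 \<Longrightarrow>
   \<exists>p. path_enum V E (2*j + 2) p"
proof (induction j arbitrary: V E)
  case 0
  then have "tree_by_degrees V E" "card V = 2" by simp_all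
  then show ?case unfolding mult_0_right add_0 by (rule path_enum_two_vertices)
next
  case (Suc j)
  have c3: "3 \<le> card V" using Suc.prems by simp
  have tC: "tree_by_degrees (inner V E) (prune V E)" using tree_prune[OF Suc.prems(1) c3] .
  have ncC: "\<forall>c\<in>inner V E. \<not> ecc_le (inner V E) (prune V E) j c"
    using no_ecc_le_prune[OF Suc.prems(1) c3] Suc.prems(2) by simp
  have cC: "card (inner V E) = 2*j + 2"
    using card_ge_if_no_ecc_le[OF tC ncC] tree_leaves_inner(3,5)[OF Suc.prems(1)] Suc.prems(3)
    by simp
  obtain p where p: "path_enum (inner V E) E (2*Suc j) p"
    using Suc.IH[OF tC ncC cC] path_enum_prune by fastforce
  have "card (leaves V E) = 2" using tree_leaves_inner(3)[OF Suc.prems(1)] cC Suc.prems(3) by simp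
  then have "\<not> 3 \<le> deg V E v" if "v \<in> V" for v
    using deg_le_2_if_two_leaves[OF Suc.prems(1), of v] c3 that by (force simp: inner_def)
  then have "at_most_one_branch V E" unfolding at_most_one_branch_def by blast
  then obtain a where "graph_iso V E {..<card V} (T_edge (card V) (Suc j) a)"
    using graph_iso_T_edge_if_spine[OF Suc.prems(1) _ p] by auto
  then have "\<exists>p. path_enum V E (card V) p"
    using Suc.prems(3) by (intro path_enum_if_graph_iso_T_edge)
  then show ?case using Suc.prems(3) by simp
qed

lemma graph_iso_T_edge_if_extremal:
  assumes t: "tree_by_degrees V E" and k: "1 \<le> k" and nc: "\<forall>c\<in>V. \<not> ecc_le V E k c"
    and cC: "card (inner V E) = 2*k" and branch: "at_most_one_branch V E"
  shows "\<exists>a\<in>{1..k}. graph_iso V E {..<card V} (T_edge (card V) k a)"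
proof -
  obtain j where j: "k = Suc j" using k by (cases k) auto
  have c3: "3 \<le> card V" using card_ge_if_no_ecc_le[OF t nc] k by simp
  obtain p where "path_enum (inner V E) E (2*k) p"
    using path_enum_if_no_ecc_le[OF tree_prune[OF t c3] no_ecc_le_prune[OF t c3 nc[unfolded j]]]
      cC j path_enum_prune by fastforce
  then obtain a where a: "a \<in> {1..2*k}" and iso: "graph_iso V E {..<card V} (T_edge (card V) k a)"
    using graph_iso_T_edge_if_spine[OF t k _ branch] by blast
  show ?thesis
  proof (cases "a \<le> k")
    case True
    then show ?thesis using a iso by auto
  next
    case False
    have "graph_iso V E {..<card V} (T_edge (card V) k (2*k+1-a))"
      using graph_iso_trans[OF iso graph_iso_T_edge_reflect] a card_ge_if_no_ecc_le[OF t nc] by auto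
    moreover have "2*k+1-a \<in> {1..k}" using False a by auto
    ultimately show ?thesis by blast
  qed
qed

section \<open>Numerical inequalities\<close>

lemma pow_Suc_ge_bernoulli: "c^(Suc s) + Suc s * a * c^s \<le> ((c::nat) + a)^(Suc s)"
proof (induction s)
  case (Suc s)
  have "c^(Suc (Suc s)) + Suc (Suc s) * a * c^(Suc s) \<le> (c + a) * (c^(Suc s) + Suc s * a * c^s)"
    by (simp add: algebra_simps)
  also have "\<dots> \<le> (c + a) * (c + a)^(Suc s)" using Suc by (intro mult_le_mono2)
  finally show ?case by simp
qed simp

lemma pow_ge_three_binomial_terms:
  "c^s * (2*c^2 + 2*(s+2)*a*c + (s+2)*(s+1)*a^2) \<le> 2 * ((c::nat) + a)^(s+2)"
proof (induction s)
  case 0 then show ?case by (simp add: power2_eq_square algebra_simps)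
next
  case (Suc s)
  have "c^(Suc s) * (2*c^2 + 2*(Suc s+2)*a*c + (Suc s+2)*(Suc s+1)*a^2)
     \<le> (c + a) * (c^s * (2*c^2 + 2*(s+2)*a*c + (s+2)*(s+1)*a^2))"
    by (simp add: power2_eq_square algebra_simps)
  also have "\<dots> \<le> (c + a) * (2 * (c + a)^(s+2))" using Suc by (intro mult_le_mono2)
  finally show ?case by simp
qed

lemma sq_mul_pow_self_le:
  assumes "2 \<le> t" shows "(2 + a)^2 * t^t \<le> 4 * ((t::nat) + a)^t"
proof -
  obtain s where s: "t = s + 2" using assms by (metis add.commute le_Suc_ex)
  define X where "X = 2*t^2 + 2*(s+2)*a*t + (s+2)*(s+1)*a^2"
  have "(2 + a)^2 * t^2 \<le> 2 * X"
  proof -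
    have "t \<le> 2*(s+1)" using s by simp
    then have "a^2 * t * (s+2) \<le> a^2 * (2*(s+1)) * (s+2)" by (intro mult_le_mono1 mult_le_mono2)
    then show ?thesis by (simp add: X_def s power2_eq_square algebra_simps)
  qed
  then have "(2 + a)^2 * t^t \<le> 2 * (t^s * X)"
    unfolding s power_add by (simp add: ac_simps)
  also have "\<dots> \<le> 2 * (2 * (t + a)^(s+2))"
    using pow_ge_three_binomial_terms[of t s a] by (simp add: X_def)
  finally show ?thesis using s by simp
qed

lemma pow_self_mul_pow_self_le_pow:
  "(2 + a)^(2 + a) * (2 + b)^(2 + b) \<le> (2 + a)^a * (4 * ((2::nat) + a + b)^(2 + b))"
proof -
  have "(2 + a)^(2 + a) * (2 + b)^(2 + b) = (2 + a)^a * ((2 + a)^2 * (2 + b)^(2 + b))"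
    by (simp only: power_add mult_ac)
  also have "\<dots> \<le> (2 + a)^a * (4 * ((2 + b) + a)^(2 + b))"
    using sq_mul_pow_self_le[of "2 + b" a] by (intro mult_le_mono2) simp
  finally show ?thesis by (simp add: ac_simps)
qed

lemma four_mul_pow_self_split:
  "4 * ((2::nat) + a + b)^(2 + a + b) = (2 + a + b)^a * (4 * (2 + a + b)^(2 + b))"
  using power_add[of "2 + a + b" a "2 + b"] by (simp add: ac_simps)

lemma pow_self_mul_pow_self_le:
  "(2 + a)^(2 + a) * (2 + b)^(2 + b) \<le> 4 * ((2::nat) + a + b)^(2 + a + b)"
proof -
  have "(2 + a)^a * (4 * (2 + a + b)^(2 + b)) \<le> (2 + a + b)^a * (4 * (2 + a + b)^(2 + b))"
    by (intro mult_le_mono1 power_mono) auto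
  then show ?thesis
    using pow_self_mul_pow_self_le_pow[of a b] four_mul_pow_self_split[of a b] by linarith
qed

lemma pow_self_mul_pow_self_less:
  assumes "1 \<le> a" "1 \<le> b"
  shows "(2 + a)^(2 + a) * (2 + b)^(2 + b) < 4 * ((2::nat) + a + b)^(2 + a + b)"
proof -
  have "(2 + a)^a * (4 * (2 + a + b)^(2 + b)) < (2 + a + b)^a * (4 * (2 + a + b)^(2 + b))"
    using assms by (intro mult_strict_right_mono power_strict_mono) auto
  then show ?thesis
    using pow_self_mul_pow_self_le_pow[of a b] four_mul_pow_self_split[of a b] by linarith
qed

lemma two_pow_card_mul_le_prod:
  "finite A \<Longrightarrow> 2^card A * (2 + (\<Sum>x\<in>A. g x)) \<le> 2 * (\<Prod>x\<in>A. (2::nat) + g x)"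
proof (induction A rule: finite_induct)
  case (insert x F)
  have "2^card (insert x F) * (2 + (\<Sum>x\<in>insert x F. g x)) = 2^card F * (2 * (2 + g x + sum g F))"
    using insert by simp
  also have "\<dots> \<le> 2^card F * ((2 + g x) * (2 + sum g F))"
    by (intro mult_le_mono2) (simp add: algebra_simps)
  also have "\<dots> = (2 + g x) * (2^card F * (2 + sum g F))" by (simp only: mult_ac)
  also have "\<dots> \<le> (2 + g x) * (2 * (\<Prod>x\<in>F. 2 + g x))"
    using insert.IH by (intro mult_le_mono2)
  finally show ?case using insert by (simp add: ac_simps)
qed simp

lemma two_pow_card_mul_less_prod:
  assumes "finite A" "u \<in> A" "v \<in> A" "u \<noteq> v" "1 \<le> g u" "1 \<le> g v"
  shows "2^card A * (2 + (\<Sum>x\<in>A. g x)) < 2 * (\<Prod>x\<in>A. (2::nat) + g x)"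
proof -
  define B where "B = A - {u, v}"
  have fB: "finite B" and A: "A = insert u (insert v B)" "u \<notin> insert v B" "v \<notin> B"
    using assms B_def by auto
  have "2^card A * (2 + (\<Sum>x\<in>A. g x)) = 2^card B * (4 * (2 + g u + g v + sum g B))"
    using A fB by (simp add: algebra_simps)
  also have "\<dots> < 2^card B * ((2 + g u) * (2 + g v) * (2 + sum g B))"
  proof -
    have "1 \<le> g u * g v" using assms by simp
    then show ?thesis by (intro mult_strict_left_mono) (simp_all add: algebra_simps)
  qed
  also have "\<dots> = (2 + g u) * (2 + g v) * (2^card B * (2 + sum g B))" by (simp only: mult_ac)
  also have "\<dots> \<le> (2 + g u) * (2 + g v) * (2 * (\<Prod>x\<in>B. 2 + g x))"
    using two_pow_card_mul_le_prod[OF fB, of g] by (intro mult_le_mono2)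
  also have "\<dots> = 2 * (\<Prod>x\<in>A. 2 + g x)"
    by (simp only: A(1) prod.insert[OF finite_insert[THEN iffD2, OF fB] A(2)]
        prod.insert[OF fB A(3)]
        mult_ac)
  finally show ?thesis .
qed

lemma prod_pow_self_le:
  "finite A \<Longrightarrow> 4 * (\<Prod>x\<in>A. ((2::nat) + g x)^(2 + g x))
     \<le> 4^card A * (2 + (\<Sum>x\<in>A. g x))^(2 + (\<Sum>x\<in>A. g x))"
proof (induction A rule: finite_induct)
  case (insert x F)
  define S where "S = (\<Sum>x\<in>F. g x)"
  define P where "P = (\<Prod>x\<in>F. ((2::nat) + g x)^(2 + g x))"
  have "4 * (\<Prod>x\<in>insert x F. (2 + g x)^(2 + g x)) = (2 + g x)^(2 + g x) * (4 * P)"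
    using insert P_def by simp
  also have "\<dots> \<le> (2 + g x)^(2 + g x) * (4^card F * (2 + S)^(2 + S))"
    using insert.IH by (intro mult_le_mono2) (simp add: S_def P_def)
  also have "\<dots> = 4^card F * ((2 + g x)^(2 + g x) * (2 + S)^(2 + S))" by (simp only: mult_ac)
  also have "\<dots> \<le> 4^card F * (4 * (2 + g x + S)^(2 + g x + S))"
    using pow_self_mul_pow_self_le by (intro mult_le_mono2)
  also have "\<dots> = 4^card (insert x F) * (2 + (\<Sum>x\<in>insert x F. g x))^(2 + (\<Sum>x\<in>insert x F. g x))"
    using insert S_def by (simp add: ac_simps)
  finally show ?case .
qed simp

lemma prod_pow_self_less:
  assumes "finite A" "u \<in> A" "v \<in> A" "u \<noteq> v" "1 \<le> g u" "1 \<le> g v"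
  shows "4 * (\<Prod>x\<in>A. ((2::nat) + g x)^(2 + g x))
    < 4^card A * (2 + (\<Sum>x\<in>A. g x))^(2 + (\<Sum>x\<in>A. g x))"
proof -
  define B where "B = A - {u, v}"
  have fB: "finite B" and A: "A = insert u (insert v B)" "u \<notin> insert v B" "v \<notin> B"
    using assms B_def by auto
  define S where "S = (\<Sum>x\<in>B. g x)"
  define P where "P = (\<Prod>x\<in>B. ((2::nat) + g x)^(2 + g x))"
  have "4 * (\<Prod>x\<in>A. ((2::nat) + g x)^(2 + g x))
      = ((2 + g u)^(2 + g u) * (2 + g v)^(2 + g v)) * (4 * P)"
    using A fB P_def by (simp add: ac_simps)
  also have "\<dots> \<le> ((2 + g u)^(2 + g u) * (2 + g v)^(2 + g v)) * (4^card B * (2 + S)^(2 + S))"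
    using prod_pow_self_le[OF fB, of g] by (intro mult_le_mono2) (simp add: S_def P_def)
  also have "\<dots> < (4 * (2 + g u + g v)^(2 + g u + g v)) * (4^card B * (2 + S)^(2 + S))"
    using pow_self_mul_pow_self_less[OF assms(5,6)] by (intro mult_strict_right_mono) auto
  also have "\<dots> = 4^Suc (card B) * ((2 + (g u + g v))^(2 + (g u + g v)) * (2 + S)^(2 + S))"
    by (simp add: ac_simps)
  also have "\<dots> \<le> 4^Suc (card B) * (4 * (2 + (g u + g v) + S)^(2 + (g u + g v) + S))"
    using pow_self_mul_pow_self_le[of "g u + g v" S] by (intro mult_le_mono2)
  also have "\<dots> = 4^card A * (2 + (\<Sum>x\<in>A. g x))^(2 + (\<Sum>x\<in>A. g x))"
    using A fB S_def by (simp add: ac_simps)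
  finally show ?thesis .
qed

lemma two_pow_mul_diff_less:
  assumes "m < m'" "m' + 2 \<le> n"
  shows "2^m * (n - m) < 2^m' * (n - m' :: nat)"
  using assms
proof (induction m' rule: less_induct)
  case (less m')
  then obtain l where l: "m' = Suc l" "m \<le> l" by (cases m') auto
  have "2^m * (n - m) \<le> 2^l * (n - l)"
    using less.IH[of l] l less.prems by (cases "m = l") auto
  also have "\<dots> < 2^m' * (n - m')" using l less.prems by simp
  finally show ?case .
qed

lemma four_mul_pow_self_less:
  assumes "2 \<le> c" shows "4 * c^c < ((c::nat) + 1)^(c + 1)"
proof -
  obtain s where s: "c = Suc s" using assms by (cases c) auto
  have "2 * c^c \<le> (c + 1)^c"
    using pow_Suc_ge_bernoulli[of c s 1] s by simp
  have "4 * c^c < 3 * (2 * c^c)" using assms by simp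
  also have "\<dots> \<le> (c + 1) * (2 * c^c)" using assms by (intro mult_le_mono1) simp
  also have "\<dots> \<le> (c + 1) * (c + 1)^c" using \<open>2 * c^c \<le> (c + 1)^c\<close> by (intro mult_le_mono2)
  finally show ?thesis by simp
qed

lemma four_pow_mul_pow_self_diff_less:
  assumes "m < m'" "m' + 2 \<le> n"
  shows "4^m' * (n - m')^(n - m') < 4^m * (n - m :: nat)^(n - m)"
  using assms
proof (induction m' rule: less_induct)
  case (less m')
  then obtain l where l: "m' = Suc l" "m \<le> l" by (cases m') auto
  define c where "c = n - m'"
  have c: "2 \<le> c" "n - l = c + 1" using less.prems l by (auto simp: c_def)
  have "4 * c^c < (c + 1)^(c + 1)" using four_mul_pow_self_less[OF c(1)] .
  then have "4^m' * c^c < 4^l * (n - l)^(n - l)" using l c by simp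
  also have "\<dots> \<le> 4^m * (n - m)^(n - m)"
    using less.IH[of l] l less.prems by (cases "m = l") auto
  finally show ?case by (simp add: c_def)
qed

section \<open>Degree products of trees\<close>

lemma gamma_k_le_1_if_ecc_le:
  assumes "ecc_le V E k c"
  shows "gamma_k V E k \<le> 1"
proof -
  have "dist_k_dominating V E k {c}" using assms unfolding dist_k_dominating_def ecc_le_def by auto
  then show ?thesis unfolding gamma_k_def by (intro Least_le exI[of _ "{c}"]) simp
qed

lemma prod_deg_eq_prod_inner:
  assumes t: "tree_by_degrees V E" and c: "2 \<le> card V" and h: "h 1 = (1::nat)"
  shows "(\<Prod>v\<in>V. h (deg V E v)) = (\<Prod>v\<in>inner V E. h (deg V E v))"
proof (rule prod.mono_neutral_right)
  show "finite V" using simple_graph_finite[OF tree_by_degrees_simple[OF t]] .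
  show "inner V E \<subseteq> V" by (auto simp: inner_def)
  have "deg V E v = 1" if "v \<in> V - inner V E" for v
    using tree_leaves_inner(1)[OF t c] that by (auto simp: leaves_def)
  then show "\<forall>v\<in>V - inner V E. h (deg V E v) = 1" using h by simp
qed

lemma two_plus_deg_minus_two: "v \<in> inner V E \<Longrightarrow> 2 + (deg V E v - 2) = deg V E v"
  unfolding inner_def using le_add_diff_inverse by blast

lemma sum_inner_excess:
  assumes t: "tree_by_degrees V E" and c: "2 \<le> card V"
  shows "2 + (\<Sum>v\<in>inner V E. deg V E v - 2) = card V - card (inner V E)"
proof -
  have "(\<Sum>v\<in>inner V E. deg V E v) = (\<Sum>v\<in>inner V E. 2 + (deg V E v - 2))"
    by (rule sum.cong[OF refl]) (simp only: two_plus_deg_minus_two)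
  then have "(\<Sum>v\<in>inner V E. deg V E v) = 2 * card (inner V E) + (\<Sum>v\<in>inner V E. deg V E v - 2)"
    by (simp only: sum.distrib sum_constant of_nat_id mult.commute)
  then show ?thesis
    using tree_leaves_inner(3,4,5)[OF t c] t c by (simp add: tree_by_degrees_def) arith
qed

lemma not_at_most_one_branchE:
  assumes "\<not> at_most_one_branch V E"
  obtains u v where "u \<in> inner V E" "v \<in> inner V E" "u \<noteq> v"
    "1 \<le> deg V E u - 2" "1 \<le> deg V E v - 2"
  using assms that unfolding at_most_one_branch_def inner_def by force

text \<open>By sum_inner_excess the excess degrees deg v - 2 of the inner vertices add up to the number
  of leaves minus 2; both products are extremal when all of the excess sits at one vertex.\<close>
lemma prod_inner_deg_ge:
  assumes t: "tree_by_degrees V E" and c: "2 \<le> card V"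
  defines "m \<equiv> card (inner V E)"
  shows "2^m * (card V - m) \<le> 2 * (\<Prod>v\<in>inner V E. deg V E v)"
    and "\<not> at_most_one_branch V E \<Longrightarrow> 2^m * (card V - m) < 2 * (\<Prod>v\<in>inner V E. deg V E v)"
proof -
  have fC: "finite (inner V E)"
    using simple_graph_finite[OF tree_by_degrees_simple[OF t]] by (simp add: inner_def)
  have deg: "(\<Prod>v\<in>inner V E. deg V E v) = (\<Prod>v\<in>inner V E. 2 + (deg V E v - 2))"
    by (rule prod.cong[OF refl]) (simp only: two_plus_deg_minus_two)
  have e: "card V - m = 2 + (\<Sum>v\<in>inner V E. deg V E v - 2)"
    using sum_inner_excess[OF t c] by (simp add: m_def)
  show "2^m * (card V - m) \<le> 2 * (\<Prod>v\<in>inner V E. deg V E v)"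
    unfolding e deg unfolding m_def by (rule two_pow_card_mul_le_prod[OF fC])
  assume "\<not> at_most_one_branch V E"
  then obtain u v where "u \<in> inner V E" "v \<in> inner V E" "u \<noteq> v"
    "1 \<le> deg V E u - 2" "1 \<le> deg V E v - 2" by (rule not_at_most_one_branchE)
  then show "2^m * (card V - m) < 2 * (\<Prod>v\<in>inner V E. deg V E v)"
    unfolding e deg unfolding m_def by (rule two_pow_card_mul_less_prod[OF fC])
qed

lemma prod_inner_pow_deg_le:
  assumes t: "tree_by_degrees V E" and c: "2 \<le> card V"
  defines "m \<equiv> card (inner V E)"
  shows "4 * (\<Prod>v\<in>inner V E. deg V E v ^ deg V E v) \<le> 4^m * (card V - m)^(card V - m)"
    and "\<not> at_most_one_branch V E \<Longrightarrow>
      4 * (\<Prod>v\<in>inner V E. deg V E v ^ deg V E v) < 4^m * (card V - m)^(card V - m)"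
proof -
  have fC: "finite (inner V E)"
    using simple_graph_finite[OF tree_by_degrees_simple[OF t]] by (simp add: inner_def)
  have deg: "(\<Prod>v\<in>inner V E. deg V E v ^ deg V E v)
      = (\<Prod>v\<in>inner V E. (2 + (deg V E v - 2))^(2 + (deg V E v - 2)))"
    by (rule prod.cong[OF refl]) (simp only: two_plus_deg_minus_two)
  have e: "card V - m = 2 + (\<Sum>v\<in>inner V E. deg V E v - 2)"
    using sum_inner_excess[OF t c] by (simp add: m_def)
  show "4 * (\<Prod>v\<in>inner V E. deg V E v ^ deg V E v) \<le> 4^m * (card V - m)^(card V - m)"
    unfolding e deg unfolding m_def by (rule prod_pow_self_le[OF fC])
  assume "\<not> at_most_one_branch V E"
  then obtain u v where "u \<in> inner V E" "v \<in> inner V E" "u \<noteq> v"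
    "1 \<le> deg V E u - 2" "1 \<le> deg V E v - 2" by (rule not_at_most_one_branchE)
  then show "4 * (\<Prod>v\<in>inner V E. deg V E v ^ deg V E v) < 4^m * (card V - m)^(card V - m)"
    unfolding e deg unfolding m_def by (rule prod_pow_self_less[OF fC])
qed

lemma card_inner_add_two_le:
  assumes t: "tree_by_degrees V E" and m: "2 \<le> card (inner V E)"
  shows "card (inner V E) + 2 \<le> card V"
proof -
  have "card (inner V E) \<le> card V"
    using simple_graph_finite[OF tree_by_degrees_simple[OF t]]
    by (auto simp: inner_def intro: card_mono)
  then show ?thesis using tree_leaves_inner(3,5)[OF t] m by simp
qed

lemma Pi1_ge_tree:
  assumes t: "tree_by_degrees V E" and k: "1 \<le> k" and m: "2*k \<le> card (inner V E)"
  shows "4^(2*k-1) * (card V - 2*k)^2 \<le> Pi1 V E"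
    and "Pi1 V E = 4^(2*k-1) * (card V - 2*k)^2 \<Longrightarrow>
      card (inner V E) = 2*k \<and> at_most_one_branch V E"
proof -
  define n where "n = card V"
  define P where "P = (\<Prod>v\<in>inner V E. deg V E v)"
  define B where "B = 2^(2*k-1) * (n - 2*k)"
  have mn: "card (inner V E) + 2 \<le> n" using card_inner_add_two_le[OF t] k m by (simp add: n_def)
  then have c: "2 \<le> card V" by (simp add: n_def)
  have Pi1: "Pi1 V E = P^2"
    unfolding Pi1_def P_def using prod_deg_eq_prod_inner[OF t c, of "\<lambda>d. d^2"]
    by (simp add: prod_power_distrib)
  have "(4::nat)^(2*k-1) = (2^(2*k-1))^2"
    using power_mult[of "2::nat" 2 "2*k-1"] power_mult[of "2::nat" "2*k-1" 2]
    by (simp add: mult.commute)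
  then have target: "4^(2*k-1) * (n - 2*k)^2 = B^2" by (simp add: B_def power_mult_distrib)
  have twoB: "2 * B = 2^(2*k) * (n - 2*k)"
    using k by (simp add: B_def power_Suc[symmetric])
  have mono: "2^(2*k) * (n - 2*k) \<le> 2^card (inner V E) * (n - card (inner V E))"
    using two_pow_mul_diff_less[of "2*k" "card (inner V E)" n] mn m
    by (cases "2*k = card (inner V E)") auto
  have "2 * B \<le> 2 * P" using twoB mono prod_inner_deg_ge(1)[OF t c] by (simp add: P_def n_def)
  then have "B \<le> P" by simp
  then show "4^(2*k-1) * (card V - 2*k)^2 \<le> Pi1 V E"
    using target Pi1 by (simp add: n_def power_mono)
  assume "Pi1 V E = 4^(2*k-1) * (card V - 2*k)^2"
  then have "B = P" using Pi1 target by (simp add: n_def power2_eq_iff_nonneg)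
  then have tight: "2^(2*k) * (n - 2*k) = 2 * P" using twoB by simp
  have "card (inner V E) = 2*k"
  proof (rule ccontr)
    assume "card (inner V E) \<noteq> 2*k"
    then have "2^(2*k) * (n - 2*k) < 2^card (inner V E) * (n - card (inner V E))"
      using two_pow_mul_diff_less[of "2*k" "card (inner V E)" n] mn m by simp
    then show False using prod_inner_deg_ge(1)[OF t c] tight by (simp add: P_def n_def)
  qed
  moreover have "at_most_one_branch V E"
    using prod_inner_deg_ge(2)[OF t c] mono tight by (fastforce simp: P_def n_def)
  ultimately show "card (inner V E) = 2*k \<and> at_most_one_branch V E" ..
qed

lemma Pi2_le_tree:
  assumes t: "tree_by_degrees V E" and k: "1 \<le> k" and m: "2*k \<le> card (inner V E)"
  shows "Pi2 V E \<le> 4^(2*k-1) * (card V - 2*k)^(card V - 2*k)"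
    and "Pi2 V E = 4^(2*k-1) * (card V - 2*k)^(card V - 2*k) \<Longrightarrow>
      card (inner V E) = 2*k \<and> at_most_one_branch V E"
proof -
  define n where "n = card V"
  have mn: "card (inner V E) + 2 \<le> n" using card_inner_add_two_le[OF t] k m by (simp add: n_def)
  then have c: "2 \<le> card V" by (simp add: n_def)
  have Pi2: "Pi2 V E = (\<Prod>v\<in>inner V E. deg V E v ^ deg V E v)"
    unfolding Pi2_def using prod_deg_eq_prod_inner[OF t c, of "\<lambda>d. d^d"] by simp
  have "(4::nat)^(2*k) = 4^Suc (2*k-1)" using k by simp
  then have four: "4^(2*k) * (n - 2*k)^(n - 2*k) = 4 * (4^(2*k-1) * (n - 2*k)^(n - 2*k))"
    by (simp only: power_Suc mult.assoc)
  have mono: "4^card (inner V E) * (n - card (inner V E))^(n - card (inner V E))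
      \<le> 4^(2*k) * (n - 2*k)^(n - 2*k)"
    using four_pow_mul_pow_self_diff_less[of "2*k" "card (inner V E)" n] mn m
    by (cases "2*k = card (inner V E)") auto
  have "4 * Pi2 V E \<le> 4^(2*k) * (n - 2*k)^(n - 2*k)"
    using order.trans[OF prod_inner_pow_deg_le(1)[OF t c, folded n_def] mono] Pi2 by simp
  then have "4 * Pi2 V E \<le> 4 * (4^(2*k-1) * (n - 2*k)^(n - 2*k))" by (simp only: four)
  then show "Pi2 V E \<le> 4^(2*k-1) * (card V - 2*k)^(card V - 2*k)" by (simp add: n_def)
  assume "Pi2 V E = 4^(2*k-1) * (card V - 2*k)^(card V - 2*k)"
  then have tight: "4 * Pi2 V E = 4^(2*k) * (n - 2*k)^(n - 2*k)" unfolding four by (simp add: n_def)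
  have "card (inner V E) = 2*k"
  proof (rule ccontr)
    assume "card (inner V E) \<noteq> 2*k"
    then have "4^card (inner V E) * (n - card (inner V E))^(n - card (inner V E))
        < 4^(2*k) * (n - 2*k)^(n - 2*k)"
      using four_pow_mul_pow_self_diff_less[of "2*k" "card (inner V E)" n] mn m by simp
    then show False using prod_inner_pow_deg_le(1)[OF t c] tight Pi2 by (simp add: n_def)
  qed
  moreover have "at_most_one_branch V E"
    using prod_inner_pow_deg_le(2)[OF t c] mono tight Pi2 by (fastforce simp: n_def)
  ultimately show "card (inner V E) = 2*k \<and> at_most_one_branch V E" ..
qed

theorem theorem3p2:
  fixes V :: "'a set" and E :: "'a \<Rightarrow> 'a \<Rightarrow> bool" and k n :: nat
  assumes "k \<ge> 2" and "is_tree V E" and "card V = n" and "gamma_k V E k = 2"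
  shows "Pi1 V E \<ge> 4^(2*k-1) * (n - 2*k)^2
    \<and> Pi2 V E \<le> 4^(2*k-1) * (n - 2*k)^(n - 2*k)
    \<and> (Pi1 V E = 4^(2*k-1) * (n - 2*k)^2 \<longleftrightarrow>
         (\<exists>a\<in>{1..k}. graph_iso V E {..<n} (T_edge n k a)))
    \<and> (Pi2 V E = 4^(2*k-1) * (n - 2*k)^(n - 2*k) \<longleftrightarrow>
         (\<exists>a\<in>{1..k}. graph_iso V E {..<n} (T_edge n k a)))"
proof -
  have t: "tree_by_degrees V E" using assms(2) by (rule is_tree_imp_tree_by_degrees)
  have k: "1 \<le> k" using assms(1) by simp
  have nc: "\<forall>c\<in>V. \<not> ecc_le V E k c" using gamma_k_le_1_if_ecc_le assms(4) by fastforce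
  have n: "2*k + 2 \<le> n" using card_ge_if_no_ecc_le[OF t nc] assms(3) by simp
  have m: "2*k \<le> card (inner V E)" using card_inner_ge_if_no_ecc_le[OF t k nc] .
  have extremal_iso: "(\<exists>a\<in>{1..k}. graph_iso V E {..<n} (T_edge n k a))"
    if "card (inner V E) = 2*k \<and> at_most_one_branch V E"
    using graph_iso_T_edge_if_extremal[OF t k nc] that assms(3) by blast
  have iso_extremal:
    "Pi1 V E = 4^(2*k-1) * (n - 2*k)^2 \<and> Pi2 V E = 4^(2*k-1) * (n - 2*k)^(n - 2*k)"
    if "\<exists>a\<in>{1..k}. graph_iso V E {..<n} (T_edge n k a)"
    using that Pi_graph_iso Pi_T_edge[of _ k n] n by fastforce
  show ?thesis
    using Pi1_ge_tree[OF t k m] Pi2_le_tree[OF t k m] extremal_iso iso_extremal assms(3) by blast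
qed

end
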